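(* Let $\beta>0$ and let $(\lambda_n)_{n\in\mathbb{N}_0}$ be complex numbers with $\limsup_{n\to\infty}|\lambda_n|/n\le\beta$. Then for every $\varepsilon>0$ there is $\alpha>0$ such that $$n!\,|\Phi_{\Lambda_n}(z)|\le e^{\alpha|z|}\left(\frac{e^{(1+\varepsilon)\beta|z|}-1}{(1+\varepsilon)\beta}\right)^n$$ for all $n\in\mathbb{N}_0$ and all $z\in\mathbb{C}$. Consequently $\limsup_{n\to\infty}\sqrt[n]{n!|\Phi_{\Lambda_n}(z)|}\le\frac{e^{\beta|z|}-1}{\beta}$ for all $z\in\mathbb{C}$.
   Context: For $\lambda_0,\dots,\lambda_n\in\mathbb{C}$ the fundamental function is the entire function $\Phi_{(\lambda_0,\dots,\lambda_n)}(z)=\frac{1}{2\pi i}\int_{|w|=R}\frac{e^{zw}}{(w-\lambda_0)\cdots(w-\lambda_n)}\,dw$, where $R>\max_j|\lambda_j|$ and the circle is positively oriented. For a sequence $(\lambda_n)$, $\Lambda_n=(\lambda_0,\dots,\lambda_n)$ and $\Phi_{\Lambda_n}=\Phi_{(\lambda_0,\dots,\lambda_n)}$. *)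

theory Defs
  imports "HOL-Analysis.Analysis" "HOL-Library.Liminf_Limsup"
begin

text \<open>Radius of the integration circle: any R > max_j |lambda_j| works; we fix
  R = 1 + max_{j \<le> n} |lambda_j|.\<close>
definition fund_radius :: "(nat \<Rightarrow> complex) \<Rightarrow> nat \<Rightarrow> real" where
  "fund_radius lam n = 1 + Max ((\<lambda>j. cmod (lam j)) ` {..n})"

text \<open>Fundamental function Phi_{Lambda_n}(z) = (1/(2 pi i)) times the contour integral
  over the positively oriented circle |w| = R of e^{zw} / prod_{j\<le>n} (w - lambda_j),
  written out via the parametrisation w(t) = R e^{2 pi i t}, t in [0,1],
  with w'(t) = 2 pi i w(t).\<close>
definition fund_fun :: "(nat \<Rightarrow> complex) \<Rightarrow> nat \<Rightarrow> complex \<Rightarrow> complex" where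
  "fund_fun lam n z =
     (let R = fund_radius lam n in
      (1 / (2 * of_real pi * \<i>)) *
      integral {0..1} (\<lambda>t::real.
        let w = of_real R * exp (2 * of_real pi * \<i> * of_real t) in
          exp (z * w) / (\<Prod>j\<le>n. (w - lam j)) * (2 * of_real pi * \<i> * w)))"

end

theory Submission
  imports Defs "HOL-Complex_Analysis.Cauchy_Integral_Formula"
begin

text \<open>
  For nodes \<lambda>_0, ..., \<lambda>_{m-1} and a radius R beyond all
  of them let Phi_m(z) = (1/(2 pi i)) times the integral of e^{zw} / prod_{j<m} (w - \<lambda>_j) over
  the circle |w| = R, so that the fundamental function of (\<lambda>_0, ..., \<lambda>_n) is Phi_{n+1}.
  Differentiating under the integral sign gives the first order recursion
  Phi_{k+1}' = \<lambda>_k Phi_{k+1} + Phi_k, with Phi_0 = 0 (Cauchy) and Phi_{k+1}(0) = [k = 0]; the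
  latter holds because the integral of w / prod (w - \<lambda>_j) along circles does not depend on the
  radius and tends to [k = 0] as the radius grows.  Variation of constants then writes
  Phi_{k+1}(z) as an integral of Phi_k(sz) over s in [0,1], and induction gives
  |Phi_{k+1}(z)| <= e^{a|z|} (e^{b|z|} - 1)^k / (b^k k!) whenever |\<lambda>_j| <= a + b j for all j.
  The limsup hypothesis provides such a linear bound for every b > \<beta>, with b = (1 + \<epsilon>) \<beta>;
  this is the first claim, and taking n-th roots and letting \<epsilon> tend to 0 gives the second.
\<close>

definition turn :: "real \<Rightarrow> complex" where
  "turn t = exp (2 * of_real pi * \<i> * of_real t)"

lemma norm_turn [simp]: "norm (turn t) = 1"
  unfolding turn_def by (simp add: norm_exp_eq_Re)

lemma turn_0 [simp]: "turn 0 = 1" and turn_1 [simp]: "turn 1 = 1"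
  unfolding turn_def by (simp_all add: exp_eq_1)

lemma continuous_on_turn [continuous_intros]:
  "continuous_on S f \<Longrightarrow> continuous_on S (\<lambda>x. turn (f x))"
  unfolding turn_def by (intro continuous_intros)

lemma has_vector_derivative_turn:
  "((\<lambda>t. c * turn t) has_vector_derivative c * (2 * of_real pi * \<i> * turn t)) (at t within S)"
proof -
  have "((\<lambda>u. c * exp (2 * of_real pi * \<i> * u)) has_field_derivative c * (2 * of_real pi * \<i> * turn t))
          (at (of_real t))"
    by (auto intro!: derivative_eq_intros simp: turn_def mult_ac)
  from has_vector_derivative_real_field[OF this] show ?thesis by (simp add: turn_def)
qed

text \<open>The integral of a derivative along a closed circle vanishes: the integrand below is,
  up to the factor 2 pi i s, the derivative of t \<mapsto> g (s turn t), which is 1-periodic.\<close>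
lemma integral_derivative_along_circle:
  assumes deriv: "\<And>t. (g has_field_derivative f (s * turn t)) (at (s * turn t))" and s: "s \<noteq> 0"
  shows "integral {0..1} (\<lambda>t. f (s * turn t) * turn t) = 0"
proof -
  define c where "c = s * (2 * of_real pi * \<i>)"
  have "((\<lambda>t. g (s * turn t)) has_vector_derivative c * (f (s * turn t) * turn t))
          (at t within {0..1})" for t
    using field_vector_diff_chain_within[OF has_vector_derivative_turn has_field_derivative_at_within[OF deriv]]
    by (simp add: o_def c_def mult_ac)
  then have "((\<lambda>t. c * (f (s * turn t) * turn t)) has_integral 0) {0..1}"
    using fundamental_theorem_of_calculus[of 0 1] by force
  moreover have "c \<noteq> 0" using s by (simp add: c_def)
  ultimately have "((\<lambda>t. f (s * turn t) * turn t) has_integral 0) {0..1}"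
    by (simp add: has_integral_mult_right_iff)
  then show ?thesis by (rule integral_unique)
qed

text \<open>For g holomorphic near all circles of radius s \<in> S, the mean of g over the circle of
  radius s does not depend on s: its derivative in s is an integral of the previous kind.\<close>
lemma circle_mean_constant:
  assumes holo: "g holomorphic_on U" and U: "open U"
    and S: "convex S" "0 \<notin> S" and on_circle: "\<And>s t. s \<in> S \<Longrightarrow> s * turn t \<in> U"
  shows "\<exists>c. \<forall>s\<in>S. integral {0..1} (\<lambda>t. g (s * turn t)) = c"
proof (rule has_field_derivative_zero_constant[OF S(1)])
  fix s0 assume s0: "s0 \<in> S"
  have cont_g: "continuous_on U g" and cont_g': "continuous_on U (deriv g)"
    using holo U by (auto intro: holomorphic_on_imp_continuous_on holomorphic_deriv)
  have "((\<lambda>s. integral (cbox 0 1) (\<lambda>t. g (s * turn t))) has_field_derivative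
          integral (cbox 0 1) (\<lambda>t. deriv g (s0 * turn t) * turn t)) (at s0 within S)"
  proof (rule leibniz_rule_field_derivative[where fx = "\<lambda>s t. deriv g (s * turn t) * turn t"])
    fix s t assume "s \<in> S"
    then have "(g has_field_derivative deriv g (s * turn t)) (at (s * turn t))"
      using holomorphic_derivI[OF holo U on_circle] by blast
    moreover have "((\<lambda>s. s * turn t) has_field_derivative turn t) (at s within S)"
      by (auto intro!: derivative_eq_intros)
    ultimately show "((\<lambda>s. g (s * turn t)) has_field_derivative deriv g (s * turn t) * turn t) (at s within S)"
      by (rule DERIV_chain2)
  next
    fix s assume "s \<in> S"
    then have "continuous_on (cbox 0 1) (\<lambda>t. g (s * turn t))"
      by (intro continuous_on_compose2[OF cont_g] continuous_intros) (auto intro: on_circle)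
    then show "(\<lambda>t. g (s * turn t)) integrable_on cbox 0 1" by (rule integrable_continuous)
  next
    have "continuous_on (S \<times> cbox 0 1) (\<lambda>p. deriv g (fst p * turn (snd p)) * turn (snd p))"
      by (intro continuous_on_compose2[OF cont_g'] continuous_intros) (auto intro: on_circle)
    then show "continuous_on (S \<times> cbox 0 1) (\<lambda>(s, t). deriv g (s * turn t) * turn t)"
      by (simp add: case_prod_beta')
  qed (use s0 S in auto)
  moreover have "integral {0..1} (\<lambda>t. deriv g (s0 * turn t) * turn t) = 0"
    using s0 S(2) holomorphic_derivI[OF holo U on_circle]
    by (intro integral_derivative_along_circle) auto
  ultimately show "((\<lambda>s. integral {0..1} (\<lambda>t. g (s * turn t))) has_field_derivative 0) (at s0 within S)"
    by simp
qed

lemma variation_of_constants: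
  fixes F G :: "complex \<Rightarrow> complex"
  assumes ode: "\<And>\<zeta>. (F has_field_derivative c * F \<zeta> + G \<zeta>) (at \<zeta>)"
  shows "((\<lambda>s. z * exp (c * z * (1 - of_real s)) * G (of_real s * z)) has_integral
           F z - exp (c * z) * F 0) {0..1}"
proof -
  have "((\<lambda>s. exp (c * z * (1 - of_real s)) * F (of_real s * z)) has_vector_derivative
          z * exp (c * z * (1 - of_real s)) * G (of_real s * z)) (at s within {0..1})" for s
  proof -
    have "((\<lambda>u. F (u * z)) has_field_derivative (c * F (of_real s * z) + G (of_real s * z)) * z)
            (at (of_real s))"
      by (rule DERIV_chain2[OF ode]) (auto intro!: derivative_eq_intros)
    then have "((\<lambda>u. exp (c * z * (1 - u)) * F (u * z)) has_field_derivative
            z * exp (c * z * (1 - of_real s)) * G (of_real s * z)) (at (of_real s))"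
      by (auto intro!: derivative_eq_intros simp: algebra_simps)
    from has_vector_derivative_real_field[OF this] show ?thesis .
  qed
  from fundamental_theorem_of_calculus[OF _ this] show ?thesis by simp
qed

definition node_poly :: "(nat \<Rightarrow> complex) \<Rightarrow> nat \<Rightarrow> complex \<Rightarrow> complex" where
  "node_poly lam m w = (\<Prod>j<m. w - lam j)"

lemma node_poly_Suc: "node_poly lam (Suc m) w = node_poly lam m w * (w - lam m)"
  by (simp add: node_poly_def)

lemma continuous_on_node_poly [continuous_intros]:
  "continuous_on S f \<Longrightarrow> continuous_on S (\<lambda>x. node_poly lam m (f x))"
  unfolding node_poly_def by (intro continuous_intros)

lemma node_poly_nonzero:
  assumes "\<forall>j<m. cmod (lam j) < cmod w"
  shows "node_poly lam m w \<noteq> 0"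
  using assms unfolding node_poly_def by (auto simp: prod_zero_iff)

lemma node_poly_circle_nonzero:
  assumes "\<forall>j<m. cmod (lam j) < R"
  shows "node_poly lam m (of_real R * turn t) \<noteq> 0"
proof (cases "m = 0")
  case True
  then show ?thesis by (simp add: node_poly_def)
next
  case False
  then have "cmod (lam 0) < R" using assms by simp
  then have "0 < R" using norm_ge_zero[of "lam 0"] by linarith
  then show ?thesis using assms by (intro node_poly_nonzero) (simp add: norm_mult)
qed

text \<open>Phi lam m R z is the contour integral of e^{zw} / node_poly(w) over |w| = R, divided by 2 pi i,
  written in the parametrisation w = R turn t (whose velocity is 2 pi i w).\<close>
definition circle_integrand :: "(nat \<Rightarrow> complex) \<Rightarrow> nat \<Rightarrow> real \<Rightarrow> complex \<Rightarrow> real \<Rightarrow> complex" where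
  "circle_integrand lam m R z t =
     exp (z * (of_real R * turn t)) / node_poly lam m (of_real R * turn t) * (of_real R * turn t)"

definition Phi :: "(nat \<Rightarrow> complex) \<Rightarrow> nat \<Rightarrow> real \<Rightarrow> complex \<Rightarrow> complex" where
  "Phi lam m R z = integral {0..1} (circle_integrand lam m R z)"

lemma continuous_on_circle_integrand:
  assumes "\<forall>j<m. cmod (lam j) < R"
  shows "continuous_on S (\<lambda>t. circle_integrand lam m R z t)"
  unfolding circle_integrand_def using node_poly_circle_nonzero[OF assms]
  by (intro continuous_intros) (auto simp: mult.commute)

lemma circle_integrand_integrable:
  assumes "\<forall>j<m. cmod (lam j) < R"
  shows "circle_integrand lam m R z integrable_on {0..1}"
  using continuous_on_circle_integrand[OF assms] by (rule integrable_continuous_interval)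

lemma Phi_has_field_derivative:
  assumes nodes: "\<forall>j<m. cmod (lam j) < R"
  shows "(Phi lam m R has_field_derivative
           integral {0..1} (\<lambda>t. of_real R * turn t * circle_integrand lam m R z t)) (at z)"
proof -
  have "((\<lambda>z. integral (cbox 0 1) (circle_integrand lam m R z)) has_field_derivative
           integral (cbox 0 1) (\<lambda>t. of_real R * turn t * circle_integrand lam m R z t)) (at z within UNIV)"
  proof (rule leibniz_rule_field_derivative)
    fix x :: complex and t :: real
    show "((\<lambda>x. circle_integrand lam m R x t) has_field_derivative
            of_real R * turn t * circle_integrand lam m R x t) (at x within UNIV)"
    proof -
      define w where "w = of_real R * turn t"
      have "node_poly lam m w \<noteq> 0" using node_poly_circle_nonzero[OF nodes] by (simp add: w_def)
      then have "((\<lambda>x. exp (x * w) * (w / node_poly lam m w)) has_field_derivative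
              w * (exp (x * w) * (w / node_poly lam m w))) (at x)"
        by (auto intro!: derivative_eq_intros simp: mult_ac)
      then show ?thesis by (simp add: circle_integrand_def w_def[symmetric])
    qed
  next
    fix x
    show "circle_integrand lam m R x integrable_on cbox 0 1"
      using circle_integrand_integrable[OF nodes] by simp
  next
    have "continuous_on (UNIV \<times> cbox 0 1)
            (\<lambda>p. of_real R * turn (snd p) * circle_integrand lam m R (fst p) (snd p))"
      unfolding circle_integrand_def using node_poly_circle_nonzero[OF nodes]
      by (intro continuous_intros) (auto simp: mult.commute)
    then show "continuous_on (UNIV \<times> cbox 0 1)
                 (\<lambda>(x, t). of_real R * turn t * circle_integrand lam m R x t)"
      by (simp add: case_prod_beta')
  qed auto
  then show ?thesis by (simp add: Phi_def[abs_def])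
qed

text \<open>Multiplying by w - \<lambda>_k cancels the last factor of the node polynomial.\<close>
lemma circle_integrand_Suc:
  assumes nodes: "\<forall>j<Suc k. cmod (lam j) < R"
  shows "of_real R * turn t * circle_integrand lam (Suc k) R z t
           = lam k * circle_integrand lam (Suc k) R z t + circle_integrand lam k R z t"
proof -
  define w where "w = of_real R * turn t"
  have "node_poly lam k w * (w - lam k) \<noteq> 0"
    using node_poly_circle_nonzero[OF nodes] by (simp add: w_def node_poly_Suc)
  then show ?thesis
    unfolding circle_integrand_def w_def[symmetric] node_poly_Suc by (simp add: field_simps)
qed

lemma Phi_ode:
  assumes nodes: "\<forall>j<Suc k. cmod (lam j) < R"
  shows "(Phi lam (Suc k) R has_field_derivative lam k * Phi lam (Suc k) R z + Phi lam k R z) (at z)"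
proof -
  have nodes': "\<forall>j<k. cmod (lam j) < R" using nodes by simp
  have "integral {0..1} (\<lambda>t. of_real R * turn t * circle_integrand lam (Suc k) R z t)
      = integral {0..1} (\<lambda>t. lam k * circle_integrand lam (Suc k) R z t + circle_integrand lam k R z t)"
    by (simp add: circle_integrand_Suc[OF nodes])
  also have "\<dots> = lam k * Phi lam (Suc k) R z + Phi lam k R z"
    unfolding Phi_def
    by (simp add: integral_add integrable_on_mult_right circle_integrand_integrable nodes nodes')
  finally have "integral {0..1} (\<lambda>t. of_real R * turn t * circle_integrand lam (Suc k) R z t)
      = lam k * Phi lam (Suc k) R z + Phi lam k R z" .
  with Phi_has_field_derivative[OF nodes, of z] show ?thesis by simp
qed

text \<open>Without nodes the integrand e^{zw} is entire, so the integral vanishes.\<close>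
lemma Phi_no_nodes: "Phi lam 0 R z = 0"
proof -
  obtain g where g: "\<And>w. (g has_field_derivative exp (z * w)) (at w)"
  proof (cases "z = 0")
    case True
    show ?thesis by (rule that[of "\<lambda>w. w"]) (auto intro!: derivative_eq_intros simp: True)
  next
    case False
    show ?thesis by (rule that[of "\<lambda>w. exp (z * w) / z"]) (auto intro!: derivative_eq_intros simp: False)
  qed
  have "R \<noteq> 0 \<Longrightarrow> integral {0..1} (\<lambda>t. exp (z * (of_real R * turn t)) * turn t) = 0"
    by (intro integral_derivative_along_circle[OF g]) auto
  moreover have "circle_integrand lam 0 R z = (\<lambda>t. of_real R * (exp (z * (of_real R * turn t)) * turn t))"
    by (simp add: fun_eq_iff circle_integrand_def node_poly_def)
  ultimately show ?thesis by (cases "R = 0") (simp_all add: Phi_def)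
qed

lemma Phi_at_zero_radius_independent:
  assumes nodes: "\<forall>j<m. cmod (lam j) \<le> \<rho>" and \<rho>: "0 \<le> \<rho>"
  shows "\<exists>c. \<forall>R>\<rho>. Phi lam m R 0 = c"
proof -
  define U where "U = {w. \<rho> < cmod w}"
  define S where "S = {s. \<rho> < Re s}"
  have "open U" unfolding U_def by (intro open_Collect_less continuous_intros)
  moreover have "(\<lambda>w. w / node_poly lam m w) holomorphic_on U"
    unfolding node_poly_def U_def using nodes
    by (intro holomorphic_intros) (auto simp: prod_zero_iff)
  moreover have "convex S" "0 \<notin> S" using \<rho> convex_halfspace_Re_gt by (auto simp: S_def)
  moreover have "s * turn t \<in> U" if "s \<in> S" for s t
    using that complex_Re_le_cmod[of s] by (auto simp: U_def S_def norm_mult)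
  ultimately obtain c where c: "\<forall>s\<in>S. integral {0..1} (\<lambda>t. s * turn t / node_poly lam m (s * turn t)) = c"
    using circle_mean_constant[of "\<lambda>w. w / node_poly lam m w" U S] by blast
  have "Phi lam m R 0 = c" if "\<rho> < R" for R
    using c that by (simp add: S_def Phi_def circle_integrand_def[abs_def])
  then show ?thesis by blast
qed

lemma node_ratio_far_estimate:
  assumes nodes: "\<forall>j<Suc k. cmod (lam j) \<le> \<rho>" and "0 \<le> \<rho>" "\<rho> \<le> \<tau>" "1 \<le> \<tau>"
    and w: "cmod w = \<rho> + \<tau>"
  shows "cmod (w / node_poly lam (Suc k) w - (if k = 0 then 1 else 0)) \<le> 2 * (\<rho> + 1) / \<tau>"
proof -
  have far: "\<tau> \<le> cmod (w - lam j)" if "j < Suc k" for j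
    using norm_triangle_ineq2[of w "lam j"] nodes that w by force
  show ?thesis
  proof (cases "k = 0")
    case True
    have "w - lam 0 \<noteq> 0" using far[of 0] assms(4) by auto
    then have "w / node_poly lam (Suc k) w - 1 = lam 0 / (w - lam 0)"
      using True by (simp add: node_poly_def field_simps)
    then have "cmod (w / node_poly lam (Suc k) w - 1) = cmod (lam 0) / cmod (w - lam 0)"
      by (simp add: norm_divide)
    also have "\<dots> \<le> \<rho> / \<tau>" using nodes far[of 0] assms(2,4) by (intro frac_le) auto
    also have "\<dots> \<le> 2 * (\<rho> + 1) / \<tau>" using assms(2,4) by (intro divide_right_mono) auto
    finally show ?thesis using True by simp
  next
    case False
    have "\<tau> ^ 2 \<le> \<tau> ^ Suc k" using False assms(4) by (intro power_increasing) auto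
    also have "\<dots> = (\<Prod>j<Suc k. \<tau>)" by simp
    also have "\<dots> \<le> (\<Prod>j<Suc k. cmod (w - lam j))" using far assms(4) by (intro prod_mono) auto
    also have "\<dots> = cmod (node_poly lam (Suc k) w)" by (simp add: node_poly_def prod_norm)
    finally have denom: "\<tau> ^ 2 \<le> cmod (node_poly lam (Suc k) w)" .
    have "cmod (w / node_poly lam (Suc k) w) \<le> (\<rho> + \<tau>) / \<tau> ^ 2"
      unfolding norm_divide w using denom assms(2,4) by (intro frac_le) auto
    also have "\<dots> \<le> (2 * \<tau>) / \<tau> ^ 2" using assms(3,4) by (intro divide_right_mono) auto
    also have "\<dots> = 2 / \<tau>" using assms(4) by (simp add: power2_eq_square)
    also have "\<dots> \<le> 2 * (\<rho> + 1) / \<tau>" using assms(2,4) by (intro divide_right_mono) auto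
    finally show ?thesis using False by simp
  qed
qed

lemma Phi_at_zero_far:
  assumes nodes: "\<forall>j<Suc k. cmod (lam j) \<le> \<rho>" and \<rho>: "0 \<le> \<rho>" and \<tau>: "max \<rho> 1 \<le> \<tau>"
  shows "cmod (Phi lam (Suc k) (\<rho> + \<tau>) 0 - (if k = 0 then 1 else 0)) \<le> 2 * (\<rho> + 1) / \<tau>"
proof -
  define R where "R = \<rho> + \<tau>"
  define T :: complex where "T = (if k = 0 then 1 else 0)"
  have R: "0 < R" using \<rho> \<tau> by (simp add: R_def)
  have "\<forall>j<Suc k. cmod (lam j) < R" using nodes \<tau> by (force simp: R_def)
  from has_integral_diff[OF integrable_integral[OF circle_integrand_integrable[OF this]]
                            has_integral_const_real[of T 0 1]]
  have diff: "((\<lambda>t. circle_integrand lam (Suc k) R 0 t - T) has_integral (Phi lam (Suc k) R 0 - T)) {0..1}"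
    by (simp add: Phi_def)
  have bound: "cmod (circle_integrand lam (Suc k) R 0 t - T) \<le> 2 * (\<rho> + 1) / \<tau>" for t
  proof -
    have "cmod (of_real R * turn t) = R" using R by (simp add: norm_mult)
    then have "cmod (of_real R * turn t) = \<rho> + \<tau>" by (simp only: R_def)
    from node_ratio_far_estimate[OF nodes \<rho> _ _ this] \<tau> show ?thesis
      by (simp add: circle_integrand_def T_def)
  qed
  have "0 \<le> 2 * (\<rho> + 1) / \<tau>" using \<rho> \<tau> by simp
  from has_integral_bound_real[OF this finite.emptyI diff bound] show ?thesis
    by (simp add: R_def T_def)
qed

text \<open>Initial values: Phi_1(0) = 1 and Phi_{k+1}(0) = 0 for k > 0.  By radius independence the value
  is the limit of the previous approximations as the radius tends to infinity.\<close>
lemma Phi_at_zero: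
  assumes nodes: "\<forall>j\<le>k. cmod (lam j) < R"
  shows "Phi lam (Suc k) R 0 = (if k = 0 then 1 else 0)"
proof -
  define \<rho> where "\<rho> = Max ((\<lambda>j. cmod (lam j)) ` {..k})"
  define T :: complex where "T = (if k = 0 then 1 else 0)"
  have \<rho>_ge: "\<forall>j<Suc k. cmod (lam j) \<le> \<rho>" by (auto simp: \<rho>_def less_Suc_eq_le intro!: Max_ge)
  have \<rho>_nonneg: "0 \<le> \<rho>" using \<rho>_ge[rule_format, of 0] norm_ge_zero[of "lam 0"] by linarith
  have "\<rho> \<in> (\<lambda>j. cmod (lam j)) ` {..k}" unfolding \<rho>_def by (intro Max_in) auto
  then have \<rho>_less: "\<rho> < R" using nodes by auto
  obtain c where c: "\<And>R'. \<rho> < R' \<Longrightarrow> Phi lam (Suc k) R' 0 = c"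
    using Phi_at_zero_radius_independent[OF \<rho>_ge \<rho>_nonneg] by blast
  have close: "cmod (c - T) \<le> 2 * (\<rho> + 1) / \<tau>" if "max \<rho> 1 \<le> \<tau>" for \<tau>
    using Phi_at_zero_far[OF \<rho>_ge \<rho>_nonneg that] c[of "\<rho> + \<tau>"] that by (simp add: T_def)
  have "((\<lambda>\<tau>. 2 * (\<rho> + 1) / \<tau>) \<longlongrightarrow> 0) at_top"
    by (intro tendsto_divide_0[OF tendsto_const] filterlim_at_top_imp_at_infinity filterlim_ident)
  moreover have "\<forall>\<^sub>F \<tau> in at_top. cmod (c - T) \<le> 2 * (\<rho> + 1) / \<tau>"
    using eventually_ge_at_top[of "max \<rho> 1"] by eventually_elim (rule close)
  ultimately have "cmod (c - T) \<le> 0" by (intro tendsto_le[OF _ _ tendsto_const]) auto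
  then show ?thesis using c[OF \<rho>_less] by (simp add: T_def)
qed

definition majorant :: "real \<Rightarrow> real \<Rightarrow> nat \<Rightarrow> real \<Rightarrow> real" where
  "majorant a b k r = exp (a * r) * (exp (b * r) - 1) ^ k / (b ^ k * fact k)"

text \<open>Rewriting the integrand of the majorant recursion so that a primitive becomes visible.\<close>
lemma majorant_integrand_eq:
  "r * exp ((a + b * real (Suc k)) * r * (1 - s)) * majorant a b k (s * r)
     = exp (a * r) * r * exp (b * r * (1 - s)) * (exp (b * r) - exp (b * r * (1 - s))) ^ k
         / (b ^ k * fact k)"
proof -
  define E where "E = exp (b * r * (1 - s))"
  have exps: "exp ((a + b * real (Suc k)) * r * (1 - s)) * exp (a * (s * r)) = exp (a * r) * E * E ^ k"
    unfolding E_def exp_of_nat_mult[symmetric] exp_add[symmetric] by (simp add: algebra_simps)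
  have shift: "E * (exp (b * (s * r)) - 1) = exp (b * r) - E"
    unfolding E_def right_diff_distrib exp_add[symmetric] by (simp add: algebra_simps)
  have "r * exp ((a + b * real (Suc k)) * r * (1 - s)) * majorant a b k (s * r)
      = r * (exp ((a + b * real (Suc k)) * r * (1 - s)) * exp (a * (s * r)))
          * (exp (b * (s * r)) - 1) ^ k / (b ^ k * fact k)"
    by (simp add: majorant_def)
  also have "\<dots> = exp (a * r) * r * E * (E * (exp (b * (s * r)) - 1)) ^ k / (b ^ k * fact k)"
    unfolding exps power_mult_distrib by (simp add: mult_ac)
  finally show ?thesis unfolding shift by (simp only: E_def)
qed

text \<open>The majorants satisfy the same integral recursion as Phi, with |\<lambda>_{k+1}| replaced by
  its bound a + b (k + 1); the primitive is e^{ar} (e^{br} - e^{br(1-s)})^{k+1} / (b^{k+1} (k+1)!).\<close>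
lemma majorant_recursion:
  assumes "b > 0"
  shows "((\<lambda>s. r * exp ((a + b * real (Suc k)) * r * (1 - s)) * majorant a b k (s * r)) has_integral
           majorant a b (Suc k) r) {0..1}"
proof -
  define C where "C = exp (a * r) / (b ^ Suc k * fact (Suc k))"
  define K where "K s = C * (exp (b * r) - exp (b * r * (1 - s))) ^ Suc k" for s
  have "(K has_real_derivative
          C * ((1 + real k) * (exp (b * r * (1 - s)) * (b * r) * (exp (b * r) - exp (b * r * (1 - s))) ^ k)))
          (at s within {0..1})" for s
    unfolding K_def by (intro DERIV_cmult DERIV_power_Suc) (auto intro!: derivative_eq_intros)
  moreover have "C * ((1 + real k) * (exp (b * r * (1 - s)) * (b * r) * X ^ k))
      = exp (a * r) * r * exp (b * r * (1 - s)) * X ^ k / (b ^ k * fact k)" for s X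
  proof -
    define D where "D = b ^ k * fact k"
    define M where "M = b * (1 + real k)"
    have "D \<noteq> 0" "M \<noteq> 0" using assms by (auto simp: D_def M_def)
    moreover have "C = exp (a * r) / (D * M)"
      by (simp add: C_def D_def M_def fact_Suc algebra_simps)
    moreover have "(1 + real k) * (exp (b * r * (1 - s)) * (b * r) * X ^ k)
        = M * (r * exp (b * r * (1 - s)) * X ^ k)"
      by (simp add: M_def algebra_simps)
    ultimately show ?thesis unfolding D_def[symmetric] by (simp add: field_simps)
  qed
  ultimately have "((\<lambda>s. r * exp ((a + b * real (Suc k)) * r * (1 - s)) * majorant a b k (s * r)) has_integral
           K 1 - K 0) {0..1}"
    unfolding majorant_integrand_eq
    by (intro fundamental_theorem_of_calculus) (auto simp: has_real_derivative_iff_has_vector_derivative)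
  then show ?thesis by (simp add: K_def C_def majorant_def)
qed

lemma norm_exp_segment_le:
  assumes c: "cmod c \<le> A" and s: "s \<in> {0..1}"
  shows "cmod (exp (c * z * (1 - of_real s))) \<le> exp (A * cmod z * (1 - s))"
proof -
  have "1 - of_real s = (of_real (1 - s) :: complex)" by simp
  then have "cmod (c * z * (1 - of_real s)) = cmod c * (cmod z * (1 - s))"
    using s by (simp only: norm_mult norm_of_real mult.assoc) simp
  then have "Re (c * z * (1 - of_real s)) \<le> cmod c * (cmod z * (1 - s))"
    using complex_Re_le_cmod by metis
  also have "\<dots> \<le> A * (cmod z * (1 - s))" using c s by (intro mult_right_mono) auto
  finally show ?thesis by (simp add: norm_exp_eq_Re mult.assoc)
qed

lemma Phi_Suc_representation:
  assumes nodes: "\<forall>j\<le>k. cmod (lam j) < R"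
  shows "((\<lambda>s. z * exp (lam k * z * (1 - of_real s)) * Phi lam k R (of_real s * z)) has_integral
           Phi lam (Suc k) R z - exp (lam k * z) * (if k = 0 then 1 else 0)) {0..1}"
proof -
  have "\<forall>j<Suc k. cmod (lam j) < R" using nodes by (simp add: less_Suc_eq_le)
  from variation_of_constants[OF Phi_ode[OF this]] show ?thesis by (simp add: Phi_at_zero[OF nodes])
qed

text \<open>Main estimate, by induction on k: comparing the integral representation of Phi_{k+1} with
  the recursion of the majorants.\<close>
lemma Phi_bound:
  assumes b: "0 < b" and growth: "\<forall>j. cmod (lam j) \<le> a + b * real j"
  shows "\<forall>j\<le>k. cmod (lam j) < R \<Longrightarrow> cmod (Phi lam (Suc k) R z) \<le> majorant a b k (cmod z)"
proof (induction k arbitrary: z)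
  case 0
  have "Phi lam (Suc 0) R z = exp (lam 0 * z)"
    using has_integral_unique[OF Phi_Suc_representation[OF "0.prems", of z]] by (simp add: Phi_no_nodes)
  moreover have "cmod (exp (lam 0 * z)) \<le> exp (a * cmod z)"
    using norm_exp_segment_le[of "lam 0" a 0 z] growth[rule_format, of 0] by simp
  ultimately show ?case by (simp add: majorant_def)
next
  case (Suc k)
  define c where "c = a + b * real (Suc k)"
  have IH: "cmod (Phi lam (Suc k) R w) \<le> majorant a b k (cmod w)" for w
    using Suc.IH Suc.prems by simp
  have repr: "((\<lambda>s. z * exp (lam (Suc k) * z * (1 - of_real s)) * Phi lam (Suc k) R (of_real s * z))
                 has_integral Phi lam (Suc (Suc k)) R z) {0..1}"
    using Phi_Suc_representation[OF Suc.prems, of z] by simp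
  have maj: "((\<lambda>s. cmod z * exp (c * cmod z * (1 - s)) * majorant a b k (s * cmod z))
                 has_integral majorant a b (Suc k) (cmod z)) {0..1}"
    unfolding c_def by (rule majorant_recursion[OF b])
  have "cmod (z * exp (lam (Suc k) * z * (1 - of_real s)) * Phi lam (Suc k) R (of_real s * z))
          \<le> cmod z * exp (c * cmod z * (1 - s)) * majorant a b k (s * cmod z)" if s: "s \<in> {0..1}" for s
  proof -
    have "cmod (exp (lam (Suc k) * z * (1 - of_real s))) \<le> exp (c * cmod z * (1 - s))"
      using growth[rule_format, of "Suc k"] s by (intro norm_exp_segment_le) (simp_all add: c_def)
    moreover have "cmod (Phi lam (Suc k) R (of_real s * z)) \<le> majorant a b k (s * cmod z)"
      using IH[of "of_real s * z"] s by (simp add: norm_mult)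
    ultimately show ?thesis
      unfolding norm_mult by (intro mult_mono mult_left_mono) auto
  qed
  then have "cmod (integral {0..1} (\<lambda>s. z * exp (lam (Suc k) * z * (1 - of_real s))
                                        * Phi lam (Suc k) R (of_real s * z)))
        \<le> integral {0..1} (\<lambda>s. cmod z * exp (c * cmod z * (1 - s)) * majorant a b k (s * cmod z))"
    using repr maj by (intro integral_norm_bound_integral) auto
  then show ?case using integral_unique[OF repr] integral_unique[OF maj] by simp
qed

lemma linear_growth_bound:
  fixes lam :: "nat \<Rightarrow> complex"
  assumes "limsup (\<lambda>n. ereal (cmod (lam n) / real n)) < ereal b" and "0 \<le> b"
  shows "\<exists>a>0. \<forall>j. cmod (lam j) \<le> a + b * real j"
proof -
  obtain N where N: "\<And>n. N \<le> n \<Longrightarrow> cmod (lam n) / real n < b"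
    using Limsup_lessD[OF assms(1)] by (auto simp: eventually_sequentially)
  define a where "a = 1 + (\<Sum>j<max N 1. cmod (lam j))"
  have a: "0 < a" by (simp add: a_def sum_nonneg add_pos_nonneg)
  have "cmod (lam j) \<le> a + b * real j" for j
  proof (cases "j < max N 1")
    case True
    then have "cmod (lam j) \<le> (\<Sum>j<max N 1. cmod (lam j))" by (intro member_le_sum) auto
    moreover have "0 \<le> b * real j" using assms(2) by simp
    ultimately show ?thesis unfolding a_def by linarith
  next
    case False
    then have "cmod (lam j) < b * real j" using N[of j] by (simp add: divide_less_eq)
    then show ?thesis using a by linarith
  qed
  with a show ?thesis by blast
qed

lemma fund_fun_eq_Phi: "fund_fun lam n z = Phi lam (Suc n) (fund_radius lam n) z"
proof -
  define c where "c = 2 * complex_of_real pi * \<i>"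
  have "c \<noteq> 0" by (simp add: c_def)
  moreover have "(let w = of_real (fund_radius lam n) * exp (2 * complex_of_real pi * \<i> * complex_of_real t) in
                   exp (z * w) / (\<Prod>j\<le>n. w - lam j) * (2 * of_real pi * \<i> * w))
                 = c * circle_integrand lam (Suc n) (fund_radius lam n) z t" for t
    by (simp add: circle_integrand_def node_poly_def turn_def lessThan_Suc_atMost Let_def c_def mult_ac)
  ultimately show ?thesis by (simp add: fund_fun_def Phi_def c_def[symmetric])
qed

lemma fund_radius_gt:
  assumes "j \<le> n" shows "cmod (lam j) < fund_radius lam n"
proof -
  have "cmod (lam j) \<le> Max ((\<lambda>j. cmod (lam j)) ` {..n})" using assms by (intro Max_ge) auto
  then show ?thesis by (simp add: fund_radius_def)
qed

lemma fund_fun_bound: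
  assumes b: "0 < b" and growth: "\<forall>j. cmod (lam j) \<le> a + b * real j"
  shows "fact n * cmod (fund_fun lam n z) \<le> exp (a * cmod z) * ((exp (b * cmod z) - 1) / b) ^ n"
proof -
  have "cmod (fund_fun lam n z) \<le> majorant a b n (cmod z)"
    unfolding fund_fun_eq_Phi using fund_radius_gt by (intro Phi_bound[OF b growth]) blast
  then have "fact n * cmod (fund_fun lam n z) \<le> fact n * majorant a b n (cmod z)"
    by (intro mult_left_mono) auto
  then show ?thesis by (simp add: majorant_def power_divide)
qed

lemma limsup_root_le_of_geometric_bound:
  fixes x :: "nat \<Rightarrow> real"
  assumes C: "0 < C" and q: "0 \<le> q" and bound: "\<And>n. x n \<le> C * q ^ n"
  shows "limsup (\<lambda>n. ereal (root n (x n))) \<le> ereal q"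
proof -
  have "\<forall>\<^sub>F n in sequentially. ereal (root n (x n)) \<le> ereal (root n C * q)"
    using eventually_gt_at_top[of 0]
  proof eventually_elim
    case (elim n)
    have "root n (x n) \<le> root n (C * q ^ n)" using bound[of n] elim by (subst real_root_le_iff) auto
    also have "\<dots> = root n C * q" using elim q by (simp add: real_root_mult real_root_power_cancel)
    finally show ?case by simp
  qed
  then have "limsup (\<lambda>n. ereal (root n (x n))) \<le> limsup (\<lambda>n. ereal (root n C * q))"
    by (rule Limsup_mono)
  also have "\<dots> = ereal q"
  proof (rule lim_imp_Limsup)
    have "(\<lambda>n. root n C * q) \<longlonglongrightarrow> 1 * q" by (intro tendsto_intros LIMSEQ_root_const C)
    then show "(\<lambda>n. ereal (root n C * q)) \<longlonglongrightarrow> ereal q" by simp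
  qed simp
  finally show ?thesis .
qed

lemma fund_fun_uniform_bound:
  assumes \<beta>: "0 < \<beta>" and limsup: "limsup (\<lambda>n. ereal (cmod (lam n) / real n)) \<le> ereal \<beta>"
    and \<epsilon>: "0 < \<epsilon>"
  shows "\<exists>\<alpha>>0. \<forall>n z. fact n * cmod (fund_fun lam n z)
           \<le> exp (\<alpha> * cmod z) * ((exp ((1 + \<epsilon>) * \<beta> * cmod z) - 1) / ((1 + \<epsilon>) * \<beta>)) ^ n"
proof -
  have b: "0 < (1 + \<epsilon>) * \<beta>" using \<beta> \<epsilon> by simp
  have "limsup (\<lambda>n. ereal (cmod (lam n) / real n)) < ereal ((1 + \<epsilon>) * \<beta>)"
    using limsup \<beta> \<epsilon> by (auto intro: le_less_trans)
  then obtain a where "0 < a" and growth: "\<forall>j. cmod (lam j) \<le> a + (1 + \<epsilon>) * \<beta> * real j"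
    using linear_growth_bound b by fastforce
  with fund_fun_bound[OF b growth] show ?thesis by blast
qed

text \<open>Second claim: by the first one, the limsup of the n-th roots is at most the base of the
  geometric bound for every \<epsilon> > 0, and this base tends to (e^{\<beta>|z|} - 1) / \<beta> as \<epsilon> \<rightarrow> 0.\<close>
lemma fund_fun_root_limsup:
  assumes \<beta>: "0 < \<beta>" and limsup: "limsup (\<lambda>n. ereal (cmod (lam n) / real n)) \<le> ereal \<beta>"
  shows "limsup (\<lambda>n. ereal (root n (fact n * cmod (fund_fun lam n z))))
           \<le> ereal ((exp (\<beta> * cmod z) - 1) / \<beta>)"
proof -
  define h where "h \<epsilon> = (exp ((1 + \<epsilon>) * \<beta> * cmod z) - 1) / ((1 + \<epsilon>) * \<beta>)" for \<epsilon>
  have le_eps: "limsup (\<lambda>n. ereal (root n (fact n * cmod (fund_fun lam n z)))) \<le> ereal (h \<epsilon>)"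
    if \<epsilon>: "0 < \<epsilon>" for \<epsilon>
  proof -
    obtain \<alpha> where bound: "\<And>n. fact n * cmod (fund_fun lam n z) \<le> exp (\<alpha> * cmod z) * h \<epsilon> ^ n"
      using fund_fun_uniform_bound[OF \<beta> limsup \<epsilon>] unfolding h_def by blast
    have "0 \<le> h \<epsilon>" using \<beta> \<epsilon> by (simp add: h_def)
    then show ?thesis by (intro limsup_root_le_of_geometric_bound[OF _ _ bound]) simp
  qed
  have "((\<lambda>\<epsilon>. ereal (h \<epsilon>)) \<longlongrightarrow> ereal (h 0)) (at_right 0)"
    unfolding h_def using \<beta> by (intro tendsto_intros) auto
  moreover have "\<forall>\<^sub>F \<epsilon> in at_right 0.
      limsup (\<lambda>n. ereal (root n (fact n * cmod (fund_fun lam n z)))) \<le> ereal (h \<epsilon>)"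
    using eventually_at_right_less[of "0::real"] by eventually_elim (rule le_eps)
  ultimately show ?thesis by (intro tendsto_lowerbound) (auto simp: h_def)
qed

theorem mainTheorem6:
  fixes \<beta> :: real and lam :: "nat \<Rightarrow> complex"
  assumes "\<beta> > 0"
    and "limsup (\<lambda>n. ereal (cmod (lam n) / real n)) \<le> ereal \<beta>"
  shows "(\<forall>\<epsilon>>0. \<exists>\<alpha>>0. \<forall>(n::nat) (z::complex).
            fact n * cmod (fund_fun lam n z)
              \<le> exp (\<alpha> * cmod z) *
                 ((exp ((1 + \<epsilon>) * \<beta> * cmod z) - 1) / ((1 + \<epsilon>) * \<beta>)) ^ n)
       \<and> (\<forall>z::complex. limsup (\<lambda>n. ereal (root n (fact n * cmod (fund_fun lam n z))))
              \<le> ereal ((exp (\<beta> * cmod z) - 1) / \<beta>))"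
  using fund_fun_uniform_bound[OF assms] fund_fun_root_limsup[OF assms] by blast

end
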